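(* Let $K=\langle \mathcal{T}_{strict},\mathcal{T}_{C_1},\ldots,\mathcal{T}_{C_k},\mathcal{A}\rangle$ be a ranked $\mathcal{EL}^{+}_{\bot}$ knowledge base over $\mathcal{C}=\{C_1,\ldots,C_k\}$. If $K$ has a preferential model, then there is an $\mathcal{EL}^{+}_{\bot}$ interpretation that is $\mathbf{T}$-compliant for $K$.
   Context: A ranked knowledge base over a finite set $\mathcal{C}=\{C_1,\ldots,C_k\}$ of $\mathcal{EL}^{+}_{\bot}$ concepts is $K=\langle \mathcal{T}_{strict},\mathcal{T}_{C_1},\ldots,\mathcal{T}_{C_k},\mathcal{A}\rangle$ with $\mathcal{T}_{strict}$ a set of concept and role inclusions, $\mathcal{A}$ an ABox, and each $\mathcal{T}_{C_j}$ a finite set of pairs $(\mathbf{T}(C_j)\sqsubseteq D,r)$, $r$ a non-negative integer. A preferential model of $K$ is a triple $\langle\Delta,<,\cdot^I\rangle$ where $\langle\Delta,\cdot^I\rangle$ is an $\mathcal{EL}^{+}_{\bot}$ interpretation satisfying all inclusions in $\mathcal{T}_{strict}$ and all assertions in $\mathcal{A}$, $<$ is an irreflexive, transitive, well-founded relation on $\Delta$, and $\min_<(C_j^I)\subseteq D^I$ for every typicality inclusion $\mathbf{T}(C_j)\sqsubseteq D$ in $K$ (where $\min_<(S)=\{u\in S\mid\nexists z\in S, z<u\}$). An element $x$ satisfies $\mathbf{T}(C_j)\sqsubseteq D$ in $I$ iff $x\notin C_j^I$ or $x\in D^I$. An $\mathcal{EL}^{+}_{\bot}$ interpretation $I$ is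 $\mathbf{T}$-compliant for $K$ if $I$ satisfies $\mathcal{T}_{strict}$ and, for every $C_h\in\mathcal{C}$ with $C_h^I\neq\emptyset$, there is $x\in C_h^I$ satisfying all defeasible inclusions in $\mathcal{T}_{C_h}$. *)

theory Defs
  imports Main
begin

datatype ('c, 'r) concept =
    Top
  | Bot
  | CName 'c
  | Conj "('c, 'r) concept" "('c, 'r) concept"
  | Exists 'r "('c, 'r) concept"

text \<open>TBox axioms: concept inclusions C \<sqsubseteq> D and role inclusions r1 o ... o rn \<sqsubseteq> s.\<close>
datatype ('c, 'r) tbox_axiom =
    CI "('c, 'r) concept" "('c, 'r) concept"
  | RI "'r list" 'r

datatype ('c, 'r, 'i) assertion =
    CA "('c, 'r) concept" 'i
  | RA 'r 'i 'i

record ('c, 'r, 'i, 'd) interp =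
  dom :: "'d set"
  cint :: "'c \<Rightarrow> 'd set"
  rint :: "'r \<Rightarrow> ('d \<times> 'd) set"
  iint :: "'i \<Rightarrow> 'd"

definition wf_interp :: "('c, 'r, 'i, 'd) interp \<Rightarrow> bool" where
  "wf_interp I \<longleftrightarrow> dom I \<noteq> {}
     \<and> (\<forall>A. cint I A \<subseteq> dom I)
     \<and> (\<forall>r. rint I r \<subseteq> dom I \<times> dom I)
     \<and> (\<forall>a. iint I a \<in> dom I)"

fun ext :: "('c, 'r, 'i, 'd) interp \<Rightarrow> ('c, 'r) concept \<Rightarrow> 'd set" where
  "ext I Top = dom I"
| "ext I Bot = {}"
| "ext I (CName A) = cint I A"
| "ext I (Conj C D) = ext I C \<inter> ext I D"
| "ext I (Exists r C) = {x \<in> dom I. \<exists>y. (x, y) \<in> rint I r \<and> y \<in> ext I C}"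

fun chain_int :: "('c, 'r, 'i, 'd) interp \<Rightarrow> 'r list \<Rightarrow> ('d \<times> 'd) set" where
  "chain_int I [] = Id_on (dom I)"
| "chain_int I (r # rs) = rint I r O chain_int I rs"

fun sat_ax :: "('c, 'r, 'i, 'd) interp \<Rightarrow> ('c, 'r) tbox_axiom \<Rightarrow> bool" where
  "sat_ax I (CI C D) \<longleftrightarrow> ext I C \<subseteq> ext I D"
| "sat_ax I (RI rs s) \<longleftrightarrow> chain_int I rs \<subseteq> rint I s"

fun sat_as :: "('c, 'r, 'i, 'd) interp \<Rightarrow> ('c, 'r, 'i) assertion \<Rightarrow> bool" where
  "sat_as I (CA C a) \<longleftrightarrow> iint I a \<in> ext I C"
| "sat_as I (RA r a b) \<longleftrightarrow> (iint I a, iint I b) \<in> rint I r"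

text \<open>K = <T_strict, T_C1, ..., T_Ck, A> over C = {C_1,...,C_k}:
  kb_strict is T_strict, kb_concepts j is C_(j+1) for j < kb_k,
  kb_defs j is T_(C_(j+1)) as a set of pairs (D, r), each meaning (T(C_(j+1)) \<sqsubseteq> D, r),
  kb_abox is A.\<close>
record ('c, 'r, 'i) ranked_kb =
  kb_strict :: "('c, 'r) tbox_axiom set"
  kb_k :: nat
  kb_concepts :: "nat \<Rightarrow> ('c, 'r) concept"
  kb_defs :: "nat \<Rightarrow> (('c, 'r) concept \<times> nat) set"
  kb_abox :: "('c, 'r, 'i) assertion set"

definition wf_ranked_kb :: "('c, 'r, 'i) ranked_kb \<Rightarrow> bool" where
  "wf_ranked_kb K \<longleftrightarrow> inj_on (kb_concepts K) {..<kb_k K}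
     \<and> (\<forall>j < kb_k K. finite (kb_defs K j))"

definition min_pref :: "('d \<times> 'd) set \<Rightarrow> 'd set \<Rightarrow> 'd set" where
  "min_pref lt S = {u \<in> S. \<not> (\<exists>z \<in> S. (z, u) \<in> lt)}"

definition preferential_model ::
  "('c, 'r, 'i) ranked_kb \<Rightarrow> ('c, 'r, 'i, 'd) interp \<Rightarrow> ('d \<times> 'd) set \<Rightarrow> bool" where
  "preferential_model K I lt \<longleftrightarrow>
     wf_interp I
     \<and> (\<forall>ax \<in> kb_strict K. sat_ax I ax)
     \<and> (\<forall>as \<in> kb_abox K. sat_as I as)
     \<and> lt \<subseteq> dom I \<times> dom I
     \<and> irrefl lt \<and> trans lt \<and> wf lt
     \<and> (\<forall>j < kb_k K. \<forall>(D, r) \<in> kb_defs K j.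
           min_pref lt (ext I (kb_concepts K j)) \<subseteq> ext I D)"

definition has_preferential_model :: "('c, 'r, 'i) ranked_kb \<Rightarrow> 'd itself \<Rightarrow> bool" where
  "has_preferential_model K _ \<longleftrightarrow> (\<exists>(I :: ('c, 'r, 'i, 'd) interp) lt. preferential_model K I lt)"

definition sat_typ_el ::
  "('c, 'r, 'i, 'd) interp \<Rightarrow> 'd \<Rightarrow> ('c, 'r) concept \<Rightarrow> ('c, 'r) concept \<Rightarrow> bool" where
  "sat_typ_el I x C D \<longleftrightarrow> x \<notin> ext I C \<or> x \<in> ext I D"

definition T_compliant :: "('c, 'r, 'i) ranked_kb \<Rightarrow> ('c, 'r, 'i, 'd) interp \<Rightarrow> bool" where
  "T_compliant K I \<longleftrightarrow>
     wf_interp I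
     \<and> (\<forall>ax \<in> kb_strict K. sat_ax I ax)
     \<and> (\<forall>h < kb_k K. ext I (kb_concepts K h) \<noteq> {} \<longrightarrow>
          (\<exists>x \<in> ext I (kb_concepts K h).
              \<forall>(D, r) \<in> kb_defs K h. sat_typ_el I x (kb_concepts K h) D))"

end

theory Submission
  imports Defs
begin

text \<open>The interpretation underlying a preferential model is itself \<open>T\<close>-compliant:
  as the preference relation is well-founded, every non-empty extension of a typicality
  concept \<open>C\<^sub>h\<close> has a minimal element, and minimal elements of \<open>C\<^sub>h\<close>
  satisfy every defeasible inclusion for \<open>C\<^sub>h\<close>.\<close>

lemma min_pref_nonempty:
  assumes "wf lt" and "S \<noteq> {}"
  shows "min_pref lt S \<noteq> {}"
proof -
  obtain x where "x \<in> S" using assms(2) by blast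
  from wfE_min[OF assms(1) this] obtain z
    where "z \<in> S" and "\<And>y. (y, z) \<in> lt \<Longrightarrow> y \<notin> S" by blast
  then have "z \<in> min_pref lt S" unfolding min_pref_def by blast
  then show ?thesis by blast
qed

lemma min_pref_subset: "min_pref lt S \<subseteq> S"
  unfolding min_pref_def by blast

lemma preferential_model_T_compliant:
  assumes "preferential_model K I lt"
  shows "T_compliant K I"
  unfolding T_compliant_def
proof (intro conjI allI impI)
  show "wf_interp I" and "\<forall>ax \<in> kb_strict K. sat_ax I ax"
    using assms unfolding preferential_model_def by simp_all
next
  fix h
  assume h: "h < kb_k K" and nonempty: "ext I (kb_concepts K h) \<noteq> {}"
  let ?C = "kb_concepts K h"
  have "wf lt" using assms unfolding preferential_model_def by simp
  then obtain z where z: "z \<in> min_pref lt (ext I ?C)"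
    using min_pref_nonempty[OF _ nonempty] by blast
  have typical: "\<forall>(D, r) \<in> kb_defs K h. min_pref lt (ext I ?C) \<subseteq> ext I D"
    using assms h unfolding preferential_model_def by simp
  have "\<forall>(D, r) \<in> kb_defs K h. sat_typ_el I z ?C D"
    using typical z unfolding sat_typ_el_def by blast
  moreover have "z \<in> ext I ?C" using min_pref_subset z ..
  ultimately show "\<exists>x \<in> ext I ?C. \<forall>(D, r) \<in> kb_defs K h. sat_typ_el I x ?C D"
    by blast
qed

theorem proposition5:
  fixes K :: "('c, 'r, 'i) ranked_kb"
  assumes "wf_ranked_kb K"
    and "has_preferential_model K TYPE('d)"
  shows "\<exists>I :: ('c, 'r, 'i, 'd) interp. T_compliant K I"
proof -
  from assms(2) obtain I :: "('c, 'r, 'i, 'd) interp" and lt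
    where "preferential_model K I lt"
    unfolding has_preferential_model_def by blast
  then show ?thesis using preferential_model_T_compliant by blast
qed

end
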